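(* Let $\Theta$ be a compact metric space, $\mathcal{H}$ a Hilbert space, and $T:\Theta\to L_1(\mathcal{H})$ a regular function with self-adjoint values. Then there exists a trace-class operator $T_\Theta$ such that $T(\theta)\le T_\Theta$ for every $\theta\in\Theta$.
   Context: $L_1(\mathcal{H})$ is the space of trace-class operators; for self-adjoint operators $A\ge B$ means $A-B$ is positive. With $d$ the metric on $\Theta$, for compact $K\subseteq\Theta$ and $\delta>0$ let $K_\delta:=\{(\theta,\eta)\in K\times K: d(\theta,\eta)<\delta\}$ and $\omega_T(K_\delta):=\inf\{\|X\|_1: X\in L_1(\mathcal{H}),\ -X\le T(\theta)-T(\eta)\le X\ \forall(\theta,\eta)\in K_\delta\}$ (infimum of the empty set is $+\infty$). $T$ is regular if $\lim_{\delta\to0}\omega_T(K_\delta)=0$ for every compact $K\subseteq\Theta$. *)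

theory Defs
  imports "HOL-Analysis.Analysis"
begin

text \<open>A complex Hilbert space is modelled as a real Hilbert space (type class
  real_inner + complete_space) together with an orthogonal complex structure J
  (multiplication by the imaginary unit): J is bounded real-linear, J (J x) = -x
  and J preserves the real inner product.  The complex inner product (linear in the
  second argument) is then cinner J x y = inner x y + i * inner (J x) y.\<close>

definition complex_structure :: "('h::{real_inner,complete_space} \<Rightarrow> 'h) \<Rightarrow> bool" where
  "complex_structure J \<longleftrightarrow> bounded_linear J \<and> (\<forall>x. J (J x) = - x) \<and>
     (\<forall>x y. inner (J x) (J y) = inner x y)"

definition cinner :: "('h::real_inner \<Rightarrow> 'h) \<Rightarrow> 'h \<Rightarrow> 'h \<Rightarrow> complex" where
  "cinner J x y = Complex (inner x y) (inner (J x) y)"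

definition bounded_op :: "('h::real_inner \<Rightarrow> 'h) \<Rightarrow> ('h \<Rightarrow> 'h) \<Rightarrow> bool" where
  "bounded_op J A \<longleftrightarrow> bounded_linear A \<and> (\<forall>x. A (J x) = J (A x))"

definition selfadjoint_op :: "('h::real_inner \<Rightarrow> 'h) \<Rightarrow> ('h \<Rightarrow> 'h) \<Rightarrow> bool" where
  "selfadjoint_op J A \<longleftrightarrow> bounded_op J A \<and> (\<forall>x y. cinner J x (A y) = cinner J (A x) y)"

definition loewner_le :: "('h::real_inner \<Rightarrow> 'h) \<Rightarrow> ('h \<Rightarrow> 'h) \<Rightarrow> ('h \<Rightarrow> 'h) \<Rightarrow> bool" where
  "loewner_le J A B \<longleftrightarrow> selfadjoint_op J A \<and> selfadjoint_op J B \<and>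
     (\<forall>x. cinner J x (B x - A x) \<in> \<real> \<and> Re (cinner J x (B x - A x)) \<ge> 0)"

definition orthonormal_fam :: "('h::real_inner \<Rightarrow> 'h) \<Rightarrow> nat \<Rightarrow> (nat \<Rightarrow> 'h) \<Rightarrow> bool" where
  "orthonormal_fam J n e \<longleftrightarrow> (\<forall>i<n. \<forall>j<n. cinner J (e i) (e j) = (if i = j then 1 else 0))"

text \<open>Trace norm: \<parallel>X\<parallel>_1 = sup of \<Sum>|<f_i, X e_i>| over pairs of (finite) orthonormal
  families; this equals tr|X| (and is +\<infinity> iff X is not trace class).\<close>
definition trace_norm :: "('h::real_inner \<Rightarrow> 'h) \<Rightarrow> ('h \<Rightarrow> 'h) \<Rightarrow> ereal" where
  "trace_norm J X = (SUP p \<in> {(n, e, f). orthonormal_fam J n e \<and> orthonormal_fam J n f}.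
      (case p of (n, e, f) \<Rightarrow> ereal (\<Sum>i<n. cmod (cinner J (f i) (X (e i))))))"

definition trace_class :: "('h::real_inner \<Rightarrow> 'h) \<Rightarrow> ('h \<Rightarrow> 'h) \<Rightarrow> bool" where
  "trace_class J X \<longleftrightarrow> bounded_op J X \<and> trace_norm J X < \<infinity>"

text \<open>K_\<delta> and the modulus \<omega>_T(K_\<delta>) (Inf {} = \<infinity> in ereal).\<close>
definition Kdelta :: "'a::metric_space set \<Rightarrow> real \<Rightarrow> ('a \<times> 'a) set" where
  "Kdelta K \<delta> = {(\<theta>, \<eta>). \<theta> \<in> K \<and> \<eta> \<in> K \<and> dist \<theta> \<eta> < \<delta>}"

definition omega :: "('h::real_inner \<Rightarrow> 'h) \<Rightarrow> ('a::metric_space \<Rightarrow> 'h \<Rightarrow> 'h) \<Rightarrow> 'a set \<Rightarrow> real \<Rightarrow> ereal" where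
  "omega J T K \<delta> = Inf {trace_norm J X | X. trace_class J X \<and>
      (\<forall>(\<theta>, \<eta>) \<in> Kdelta K \<delta>.
         loewner_le J (- X) (\<lambda>x. T \<theta> x - T \<eta> x) \<and> loewner_le J (\<lambda>x. T \<theta> x - T \<eta> x) X)}"

definition regular :: "('h::real_inner \<Rightarrow> 'h) \<Rightarrow> ('a::metric_space \<Rightarrow> 'h \<Rightarrow> 'h) \<Rightarrow> bool" where
  "regular J T \<longleftrightarrow> (\<forall>K. compact K \<longrightarrow> ((\<lambda>\<delta>. omega J T K \<delta>) \<longlongrightarrow> 0) (at_right 0))"

end

theory Submission
  imports Defs
begin

text \<open>By regularity there are \<delta> > 0 and a trace-class X with T \<theta> - T \<eta> \<le> X whenever
  d(\<theta>, \<eta>) < \<delta>. Covering the compact \<Theta> by finitely many \<delta>-balls with centres c,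
  T \<theta> \<le> X + T c \<le> X + \<Sum>c P c, where P c is a positive trace-class operator dominating T c.

  Such a majorant exists for every self-adjoint trace-class A. Choose unit vectors e k greedily,
  each maximising the quadratic form of A on the complex orthogonal complement of the previous
  ones. They are eigenvectors with eigenvalues \<lambda> k \<ge> 0 and \<Sum>k \<lambda> k \<le> \<parallel>A\<parallel>_1, so
  P = \<Sum>k \<lambda> k (projection onto the complex line of e k) is trace class and A \<le> P. The maxima
  are attained because the trace bound leaves only finitely many orthonormal directions in which
  the quadratic form exceeds half its supremum \<lambda>; off these directions
  \<lambda> \<parallel>x\<parallel>^2 - \<langle>x, A x\<rangle> is coercive, so a maximising sequence whose finite-dimensional part
  converges is Cauchy.\<close>

lemma sum_lessThan_double:
  fixes f :: "nat \<Rightarrow> 'a::comm_monoid_add"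
  shows "(\<Sum>k<2*n. f k) = (\<Sum>i<n. f (2*i) + f (2*i+1))"
  by (induction n) (auto simp: numeral_2_eq_2 add.assoc)

lemma norm_diff_power2_le:
  fixes u w :: "'a::real_normed_vector"
  shows "(norm (u - w))\<^sup>2 \<le> 2 * (norm u)\<^sup>2 + 2 * (norm w)\<^sup>2"
proof -
  have "(norm (u - w))\<^sup>2 \<le> (norm u + norm w)\<^sup>2"
    by (simp add: power_mono norm_triangle_ineq4)
  also have "\<dots> \<le> 2 * (norm u)\<^sup>2 + 2 * (norm w)\<^sup>2"
    using sum_squares_bound[of "norm u" "norm w"] by (simp add: power2_sum)
  finally show ?thesis .
qed

lemma Cauchy_if_dist_power2_le:
  fixes s :: "nat \<Rightarrow> 'a::metric_space"
  assumes dist_le: "\<And>a b. (dist (s a) (s b))\<^sup>2 \<le> \<beta> a + \<beta> b" and "\<beta> \<longlonglongrightarrow> 0"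
  shows "Cauchy s"
proof (rule metric_CauchyI)
  fix \<epsilon> :: real assume "\<epsilon> > 0"
  then have "eventually (\<lambda>n. \<bar>\<beta> n\<bar> < \<epsilon>\<^sup>2 / 2) sequentially"
    using \<open>\<beta> \<longlonglongrightarrow> 0\<close> by (auto dest!: tendstoD[of _ _ _ "\<epsilon>\<^sup>2 / 2"] simp: dist_real_def)
  then obtain M where M: "\<And>n. n \<ge> M \<Longrightarrow> \<bar>\<beta> n\<bar> < \<epsilon>\<^sup>2 / 2"
    by (auto simp: eventually_sequentially)
  have "dist (s m) (s n) < \<epsilon>" if "m \<ge> M" "n \<ge> M" for m n
  proof -
    have "(dist (s m) (s n))\<^sup>2 < \<epsilon>\<^sup>2" using dist_le[of m n] M[OF that(1)] M[OF that(2)] by linarith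
    then show ?thesis using \<open>\<epsilon> > 0\<close> by (simp add: power_less_imp_less_base)
  qed
  then show "\<exists>M. \<forall>m\<ge>M. \<forall>n\<ge>M. dist (s m) (s n) < \<epsilon>" by blast
qed

lemma linear_coeff_eq_0_if_quadratic_nonneg:
  fixes a b :: real
  assumes "\<And>t. 0 \<le> 2 * t * b + t\<^sup>2 * a"
  shows "b = 0"
proof -
  have "a \<ge> 0" using assms[of 1] assms[of "-1"] by simp
  define t where "t = - b / (a + 1)"
  have ta: "t * (a + 1) = - b" using \<open>a \<ge> 0\<close> by (simp add: t_def)
  have "(2 * t * b + t\<^sup>2 * a) * (a + 1)\<^sup>2 = 2 * b * (t * (a + 1)) * (a + 1) + (t * (a + 1))\<^sup>2 * a"
    by (simp add: power2_eq_square algebra_simps)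
  also have "\<dots> = - (b\<^sup>2 * (a + 2))" unfolding ta by (simp add: power2_eq_square algebra_simps)
  finally have "b\<^sup>2 * (a + 2) \<le> 0" using assms[of t] by (metis neg_0_le_iff_le zero_le_mult_iff zero_le_power2)
  then show ?thesis using \<open>a \<ge> 0\<close> by (simp add: mult_le_0_iff)
qed

lemma compact_bounded_combinations:
  fixes u :: "nat \<Rightarrow> 'a::real_normed_vector"
  shows "compact {\<Sum>k<N. c k *\<^sub>R u k | c. \<forall>k<N. \<bar>c k\<bar> \<le> 1}"
proof (induction N)
  case 0 then show ?case by simp
next
  case (Suc N)
  let ?K = "{\<Sum>k<N. c k *\<^sub>R u k | c. \<forall>k<N. \<bar>c k\<bar> \<le> 1}"
  let ?L = "(\<lambda>t. t *\<^sub>R u N) ` {-1..1}"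
  have "compact ?L"
    by (rule compact_continuous_image) (auto intro!: continuous_intros)
  moreover have "{\<Sum>k<Suc N. c k *\<^sub>R u k | c. \<forall>k<Suc N. \<bar>c k\<bar> \<le> 1} = {x + y |x y. x \<in> ?K \<and> y \<in> ?L}"
  proof (intro equalityI subsetI)
    fix z assume "z \<in> {\<Sum>k<Suc N. c k *\<^sub>R u k | c. \<forall>k<Suc N. \<bar>c k\<bar> \<le> 1}"
    then obtain c where "z = (\<Sum>k<N. c k *\<^sub>R u k) + c N *\<^sub>R u N" "\<forall>k<Suc N. \<bar>c k\<bar> \<le> 1"
      by auto
    then show "z \<in> {x + y |x y. x \<in> ?K \<and> y \<in> ?L}" by (fastforce simp: abs_le_iff)
  next
    fix z assume "z \<in> {x + y |x y. x \<in> ?K \<and> y \<in> ?L}"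
    then obtain c t where z: "z = (\<Sum>k<N. c k *\<^sub>R u k) + t *\<^sub>R u N"
      and "\<forall>k<N. \<bar>c k\<bar> \<le> 1" "t \<in> {-1..1}" by blast
    then have "z = (\<Sum>k<Suc N. (c(N := t)) k *\<^sub>R u k)" "\<forall>k<Suc N. \<bar>(c(N := t)) k\<bar> \<le> 1"
      by (auto simp: less_Suc_eq)
    then show "z \<in> {\<Sum>k<Suc N. c k *\<^sub>R u k | c. \<forall>k<Suc N. \<bar>c k\<bar> \<le> 1}" by blast
  qed
  ultimately show ?case using compact_sums[OF Suc] by simp
qed

text \<open>The library states these two facts for class banach, which the Hilbert space type
  below, of sort {real_inner, complete_space}, is not known to belong to.\<close>

lemma summable_comparison_test_complete:
  fixes f :: "nat \<Rightarrow> 'a::{real_normed_vector,complete_space}"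
  assumes g: "summable g" and le: "\<And>n. norm (f n) \<le> g n"
  shows "summable f"
proof (rule summable_bounded_partials)
  show "(\<lambda>a. \<Sum>k. g (k + Suc a)) \<longlonglongrightarrow> 0"
    using LIMSEQ_Suc[OF suminf_exist_split2[OF g]] by simp
  have "norm (sum f {a<..b}) \<le> (\<Sum>k. g (k + Suc a))" if "a < b" for a b
  proof -
    have g_nonneg: "0 \<le> g n" for n using le[of n] norm_ge_zero order_trans by blast
    have "norm (sum f {a<..b}) \<le> sum g {a<..b}" using le by (rule sum_norm_le)
    also have "\<dots> = sum g {..b} - sum g {..a}"
    proof -
      have "{a<..b} = {..b} - {..a}" by auto
      then show ?thesis using that by (simp add: sum_diff)
    qed
    also have "\<dots> \<le> suminf g - sum g {..a}"
      using sum_le_suminf[OF g, of "{..b}"] g_nonneg by simp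
    also have "\<dots> = (\<Sum>k. g (k + Suc a))"
      using suminf_split_initial_segment[OF g, of "Suc a"] by (simp add: lessThan_Suc_atMost)
    finally show ?thesis .
  qed
  then show "eventually (\<lambda>x0. \<forall>a\<ge>x0. \<forall>b>a. norm (sum f {a<..b}) \<le> (\<Sum>k. g (k + Suc a))) sequentially"
    by simp
qed

lemma norm_suminf_le_complete:
  fixes f :: "nat \<Rightarrow> 'a::{real_normed_vector,complete_space}"
  assumes g: "summable g" and le: "\<And>n. norm (f n) \<le> g n"
  shows "norm (suminf f) \<le> suminf g"
proof (rule LIMSEQ_le_const2)
  show "(\<lambda>n. norm (sum f {..<n})) \<longlonglongrightarrow> norm (suminf f)"
    by (intro tendsto_norm summable_LIMSEQ summable_comparison_test_complete[OF g le])
  have "norm (sum f {..<n}) \<le> suminf g" for n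
  proof -
    have "norm (sum f {..<n}) \<le> sum g {..<n}" using le by (rule sum_norm_le)
    also have "\<dots> \<le> suminf g" using g le by (intro sum_le_suminf) (auto intro: order_trans[OF norm_ge_zero])
    finally show ?thesis .
  qed
  then show "\<exists>N. \<forall>n\<ge>N. norm (sum f {..<n}) \<le> suminf g" by blast
qed

definition real_orthonormal :: "nat \<Rightarrow> (nat \<Rightarrow> 'a::real_inner) \<Rightarrow> bool" where
  "real_orthonormal N u \<longleftrightarrow> (\<forall>i<N. \<forall>j<N. inner (u i) (u j) = (if i = j then 1 else 0))"

definition orth_proj :: "nat \<Rightarrow> (nat \<Rightarrow> 'a::real_inner) \<Rightarrow> 'a \<Rightarrow> 'a" where
  "orth_proj N u x = (\<Sum>k<N. inner (u k) x *\<^sub>R u k)"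

lemma inner_real_orthonormal_sum:
  assumes "real_orthonormal N u" "j < N"
  shows "inner (u j) (\<Sum>k<N. c k *\<^sub>R u k) = c j"
proof -
  have "inner (u j) (\<Sum>k<N. c k *\<^sub>R u k) = (\<Sum>k<N. c k * (if j = k then 1 else 0))"
    using assms by (auto simp: inner_sum_right real_orthonormal_def intro!: sum.cong)
  then show ?thesis using assms(2) by (simp add: if_distrib cong: if_cong)
qed

lemma inner_real_orthonormal_sums:
  assumes "real_orthonormal N u"
  shows "inner (\<Sum>k<N. c k *\<^sub>R u k) (\<Sum>k<N. d k *\<^sub>R u k) = (\<Sum>k<N. c k * d k)"
  using inner_real_orthonormal_sum[OF assms] by (simp add: inner_sum_left)

lemma inner_orth_proj_residual:
  assumes "real_orthonormal N u" "j < N"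
  shows "inner (u j) (x - orth_proj N u x) = 0"
  using inner_real_orthonormal_sum[OF assms, of "\<lambda>k. inner (u k) x"]
  by (simp add: orth_proj_def inner_diff_right)

lemma norm_orth_proj_Pythagorean:
  assumes "real_orthonormal N u"
  shows "(norm x)\<^sup>2 = (\<Sum>k<N. (inner (u k) x)\<^sup>2) + (norm (x - orth_proj N u x))\<^sup>2"
proof -
  have "orthogonal (orth_proj N u x) (x - orth_proj N u x)"
    using inner_orth_proj_residual[OF assms]
    by (simp add: orthogonal_def orth_proj_def inner_sum_left)
  then have "(norm x)\<^sup>2 = (norm (orth_proj N u x))\<^sup>2 + (norm (x - orth_proj N u x))\<^sup>2"
    using norm_add_Pythagorean by fastforce
  moreover have "(norm (orth_proj N u x))\<^sup>2 = (\<Sum>k<N. (inner (u k) x)\<^sup>2)"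
    unfolding power2_norm_eq_inner orth_proj_def inner_real_orthonormal_sums[OF assms]
    by (simp add: power2_eq_square)
  ultimately show ?thesis by simp
qed

lemma orth_proj_convergent_subseq:
  fixes x :: "nat \<Rightarrow> 'a::real_inner"
  assumes u: "real_orthonormal N u" and x: "\<And>n. norm (x n) \<le> 1"
  obtains r p where "strict_mono r" "(\<lambda>n. orth_proj N u (x (r n))) \<longlonglongrightarrow> p"
proof -
  let ?K = "{\<Sum>k<N. c k *\<^sub>R u k | c. \<forall>k<N. \<bar>c k\<bar> \<le> 1}"
  have "\<bar>inner (u k) (x n)\<bar> \<le> 1" if "k < N" for k n
  proof -
    have "norm (u k) = 1" using u that by (simp add: real_orthonormal_def norm_eq_sqrt_inner)
    then show ?thesis using Cauchy_Schwarz_ineq2[of "u k" "x n"] x[of n] by simp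
  qed
  then have "orth_proj N u (x n) \<in> ?K" for n
    unfolding orth_proj_def by (intro CollectI exI[of _ "\<lambda>k. inner (u k) (x n)"]) simp
  then have "\<forall>n. orth_proj N u (x n) \<in> ?K" by blast
  with compact_imp_seq_compact[OF compact_bounded_combinations]
  obtain p r where "strict_mono r" "((\<lambda>n. orth_proj N u (x n)) \<circ> r) \<longlonglongrightarrow> p"
    by (rule seq_compactE)
  then show ?thesis using that by (simp add: o_def)
qed

locale complex_hilbert =
  fixes J :: "'h::{real_inner,complete_space} \<Rightarrow> 'h"
  assumes complex_structure: "complex_structure J"
begin

sublocale J: bounded_linear J
  using complex_structure by (simp add: complex_structure_def)

lemma J_J [simp]: "J (J x) = - x"
  using complex_structure by (simp add: complex_structure_def)

lemma inner_J_J [simp]: "inner (J x) (J y) = inner x y"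
  using complex_structure by (simp add: complex_structure_def)

lemma inner_J_left: "inner (J x) y = - inner x (J y)"
  using inner_J_J[of x "J y"] by simp

lemma inner_J_self [simp]: "inner (J x) x = 0" "inner x (J x) = 0"
  using inner_J_left[of x x] by (simp_all add: inner_commute)

lemma norm_J [simp]: "norm (J x) = norm x"
  by (simp add: norm_eq_sqrt_inner)

lemma orthonormal_fam_iff:
  "orthonormal_fam J n w \<longleftrightarrow>
     (\<forall>i<n. \<forall>j<n. inner (w i) (w j) = (if i = j then 1 else 0) \<and> inner (J (w i)) (w j) = 0)"
  unfolding orthonormal_fam_def cinner_def by (auto simp: complex_eq_iff)

lemma norm_cinner_le: "cmod (cinner J x y) \<le> \<bar>inner x y\<bar> + \<bar>inner (J x) y\<bar>"
  unfolding cinner_def using cmod_le[of "Complex (inner x y) (inner (J x) y)"] by simp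

lemma selfadjoint_op_iff:
  "selfadjoint_op J A \<longleftrightarrow> bounded_op J A \<and> (\<forall>x y. inner x (A y) = inner (A x) y)"
proof
  assume "selfadjoint_op J A"
  then show "bounded_op J A \<and> (\<forall>x y. inner x (A y) = inner (A x) y)"
    unfolding selfadjoint_op_def cinner_def by (auto simp: complex_eq_iff)
next
  assume A: "bounded_op J A \<and> (\<forall>x y. inner x (A y) = inner (A x) y)"
  then have AJ: "\<And>x. A (J x) = J (A x)" by (simp add: bounded_op_def)
  show "selfadjoint_op J A"
    using A unfolding selfadjoint_op_def cinner_def by (auto simp: complex_eq_iff simp flip: AJ)
qed

lemma selfadjoint_op_symmetric: "selfadjoint_op J A \<Longrightarrow> inner x (A y) = inner (A x) y"
  by (simp add: selfadjoint_op_iff)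

lemma inner_J_selfadjoint_op_self:
  assumes "selfadjoint_op J A"
  shows "inner (J x) (A x) = 0"
proof -
  have "A (J x) = J (A x)" using assms by (simp add: selfadjoint_op_def bounded_op_def)
  then have "inner (J x) (A x) = inner (J (A x)) x" by (simp add: selfadjoint_op_symmetric[OF assms])
  also have "\<dots> = - inner (A x) (J x)" by (rule inner_J_left)
  also have "\<dots> = - inner (J x) (A x)" by (simp add: inner_commute)
  finally show ?thesis by simp
qed

lemma selfadjoint_op_diff:
  "selfadjoint_op J A \<Longrightarrow> selfadjoint_op J B \<Longrightarrow> selfadjoint_op J (\<lambda>x. B x - A x)"
  unfolding selfadjoint_op_iff bounded_op_def
  by (auto simp: bounded_linear_sub inner_diff_left inner_diff_right J.diff)

lemma selfadjoint_op_add: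
  "selfadjoint_op J A \<Longrightarrow> selfadjoint_op J B \<Longrightarrow> selfadjoint_op J (\<lambda>x. A x + B x)"
  unfolding selfadjoint_op_iff bounded_op_def
  by (auto simp: bounded_linear_add inner_add_left inner_add_right J.add)

lemma loewner_le_iff:
  assumes "selfadjoint_op J A" "selfadjoint_op J B"
  shows "loewner_le J A B \<longleftrightarrow> (\<forall>x. inner x (A x) \<le> inner x (B x))"
proof -
  have "cinner J x (B x - A x) = complex_of_real (inner x (B x - A x))" for x
    using inner_J_selfadjoint_op_self[OF selfadjoint_op_diff[OF assms], of x]
    by (simp add: cinner_def complex_eq_iff)
  then show ?thesis using assms by (auto simp: loewner_le_def inner_diff_right)
qed

lemma trace_norm_ge:
  assumes "orthonormal_fam J n e" "orthonormal_fam J n f"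
  shows "ereal (\<Sum>i<n. cmod (cinner J (f i) (X (e i)))) \<le> trace_norm J X"
  unfolding trace_norm_def by (rule SUP_upper2[of "(n, e, f)"]) (use assms in auto)

lemma trace_norm_nonneg: "0 \<le> trace_norm J X"
  using trace_norm_ge[of 0 "\<lambda>_. 0" "\<lambda>_. 0" X] by (simp add: orthonormal_fam_def zero_ereal_def)

lemma trace_norm_le:
  assumes "\<And>n e f. orthonormal_fam J n e \<Longrightarrow> orthonormal_fam J n f \<Longrightarrow>
     (\<Sum>i<n. cmod (cinner J (f i) (X (e i)))) \<le> b"
  shows "trace_norm J X \<le> ereal b"
  unfolding trace_norm_def by (rule SUP_least) (use assms in auto)

lemma trace_class_add:
  assumes "trace_class J A" "trace_class J B"
  shows "trace_class J (\<lambda>x. A x + B x)"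
proof -
  obtain a b where ab: "trace_norm J A = ereal a" "trace_norm J B = ereal b"
    using assms trace_norm_nonneg[of A] trace_norm_nonneg[of B]
    by (cases "trace_norm J A"; cases "trace_norm J B") (auto simp: trace_class_def)
  have "trace_norm J (\<lambda>x. A x + B x) \<le> ereal (a + b)"
  proof (rule trace_norm_le)
    fix n e f assume ef: "orthonormal_fam J n e" "orthonormal_fam J n f"
    have "(\<Sum>i<n. cmod (cinner J (f i) (A (e i) + B (e i)))) \<le>
          (\<Sum>i<n. cmod (cinner J (f i) (A (e i)))) + (\<Sum>i<n. cmod (cinner J (f i) (B (e i))))"
      unfolding sum.distrib[symmetric]
      by (intro sum_mono) (simp add: cinner_def complex_eq_iff inner_add_right norm_triangle_ineq
          flip: complex_add)
    also have "\<dots> \<le> a + b" using trace_norm_ge[OF ef, of A] trace_norm_ge[OF ef, of B] ab by simp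
    finally show "(\<Sum>i<n. cmod (cinner J (f i) (A (e i) + B (e i)))) \<le> a + b" .
  qed
  moreover have "bounded_op J (\<lambda>x. A x + B x)"
    using assms by (auto simp: trace_class_def bounded_op_def bounded_linear_add J.add)
  ultimately show ?thesis unfolding trace_class_def by auto
qed

lemma trace_class_zero: "trace_class J (\<lambda>x. 0)" and selfadjoint_op_zero: "selfadjoint_op J (\<lambda>x. 0)"
proof -
  have "bounded_op J (\<lambda>x. 0)" by (simp add: bounded_op_def)
  moreover have "trace_norm J (\<lambda>x. 0) \<le> ereal 0"
    by (rule trace_norm_le) (simp add: cinner_def flip: zero_complex.code)
  ultimately show "trace_class J (\<lambda>x. 0)" "selfadjoint_op J (\<lambda>x. 0)"
    by (auto simp: trace_class_def selfadjoint_op_iff intro: le_less_trans)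
qed

lemma trace_class_selfadjoint_op_sum:
  assumes "finite C" "\<And>c. c \<in> C \<Longrightarrow> trace_class J (P c) \<and> selfadjoint_op J (P c)"
  shows "trace_class J (\<lambda>x. \<Sum>c\<in>C. P c x) \<and> selfadjoint_op J (\<lambda>x. \<Sum>c\<in>C. P c x)"
  using assms
proof (induction C rule: finite_induct)
  case empty
  then show ?case using trace_class_zero selfadjoint_op_zero by simp
next
  case (insert c C)
  then show ?case using trace_class_add[of "P c"] selfadjoint_op_add[of "P c"] by simp
qed

text \<open>Complex orthogonality to w i is real orthogonality to both w i and J (w i).\<close>
definition orthocompl :: "nat \<Rightarrow> (nat \<Rightarrow> 'h) \<Rightarrow> 'h set" where
  "orthocompl m w = {z. \<forall>i<m. inner (w i) z = 0 \<and> inner (J (w i)) z = 0}"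

lemma orthocompl_cong: "(\<And>i. i < m \<Longrightarrow> w i = w' i) \<Longrightarrow> orthocompl m w = orthocompl m w'"
  by (simp add: orthocompl_def)

lemma subspace_orthocompl: "subspace (orthocompl m w)"
  unfolding subspace_def orthocompl_def by (auto simp: inner_add_right)

lemma closed_orthocompl: "closed (orthocompl m w)"
proof -
  have "orthocompl m w = (\<Inter>i<m. {z. inner (w i) z = 0} \<inter> {z. inner (J (w i)) z = 0})"
    by (auto simp: orthocompl_def)
  then show ?thesis by (simp add: closed_INT closed_Int closed_hyperplane)
qed

lemma J_orthocompl: "z \<in> orthocompl m w \<Longrightarrow> J z \<in> orthocompl m w"
  using inner_J_left[of "w _" z] by (auto simp: orthocompl_def)

lemma orthonormal_fam_extend:
  assumes w: "orthonormal_fam J m w" and z: "norm z = 1" "z \<in> orthocompl m w"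
  shows "orthonormal_fam J (Suc m) (w(m := z))"
  unfolding orthonormal_fam_iff
proof (intro allI impI)
  fix i j assume ij: "i < Suc m" "j < Suc m"
  have zz: "inner z z = 1" using z(1) by (simp flip: power2_norm_eq_inner)
  have zw: "inner (w i) z = 0" "inner (J (w i)) z = 0" if "i < m" for i
    using z(2) that by (auto simp: orthocompl_def)
  show "inner ((w(m := z)) i) ((w(m := z)) j) = (if i = j then 1 else 0) \<and>
        inner (J ((w(m := z)) i)) ((w(m := z)) j) = 0"
    using ij w zz zw[of i] zw[of j]
    by (cases "i = m"; cases "j = m")
       (auto simp: orthonormal_fam_iff inner_commute inner_J_left less_Suc_eq)
qed

definition realified :: "(nat \<Rightarrow> 'h) \<Rightarrow> nat \<Rightarrow> 'h" where
  "realified w k = (if even k then w (k div 2) else J (w (k div 2)))"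

lemma sum_realified: "(\<Sum>k<2*n. f (realified w k)) = (\<Sum>i<n. f (w i) + f (J (w i)))"
  by (simp add: sum_lessThan_double realified_def)

lemma real_orthonormal_realified:
  assumes "orthonormal_fam J m w"
  shows "real_orthonormal (2*m) (realified w)"
  unfolding real_orthonormal_def
proof (intro allI impI)
  fix i j assume "i < 2*m" "j < 2*m"
  moreover have "i = j \<longleftrightarrow> i div 2 = j div 2 \<and> even i = even j"
    by (metis div_mult_mod_eq odd_iff_mod_2_eq_one even_iff_mod_2_eq_zero)
  ultimately show "inner (realified w i) (realified w j) = (if i = j then 1 else 0)"
    using assms by (auto simp: realified_def orthonormal_fam_iff inner_J_left inner_commute)
qed

lemma orth_proj_realified_residual:
  assumes "orthonormal_fam J m w"
  shows "x - orth_proj (2*m) (realified w) x \<in> orthocompl m w"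
  using inner_orth_proj_residual[OF real_orthonormal_realified[OF assms], of "2*_" x]
    inner_orth_proj_residual[OF real_orthonormal_realified[OF assms], of "2*_+1" x]
  by (auto simp: orthocompl_def realified_def)

lemma inner_orth_proj_realified_orthocompl:
  assumes "z \<in> orthocompl m w"
  shows "inner (orth_proj (2*m) (realified w) x) z = 0"
proof -
  have "inner (orth_proj (2*m) (realified w) x) z
      = (\<Sum>k<2*m. inner (realified w k) x * inner (realified w k) z)"
    by (simp add: orth_proj_def inner_sum_left)
  also have "\<dots> = 0"
    unfolding sum_realified[where f = "\<lambda>v. inner v x * inner v z"] using assms
    by (simp add: orthocompl_def)
  finally show ?thesis .
qed

lemma orth_proj_realified_in_subspace:
  assumes "subspace S" "\<And>x. x \<in> S \<Longrightarrow> J x \<in> S" "\<And>i. i < m \<Longrightarrow> w i \<in> S"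
  shows "orth_proj (2*m) (realified w) x \<in> S"
  unfolding orth_proj_def using assms
  by (intro subspace_sum subspace_scale) (auto simp: realified_def div_less_iff_less_mult)

definition line_proj :: "'h \<Rightarrow> 'h \<Rightarrow> 'h" where
  "line_proj e x = inner e x *\<^sub>R e + inner (J e) x *\<^sub>R J e"

lemma bounded_linear_line_proj: "bounded_linear (line_proj e)"
  unfolding line_proj_def
  by (intro bounded_linear_add bounded_linear_compose[OF bounded_linear_scaleR_left]
      bounded_linear_inner_right)

sublocale line_proj: bounded_linear "line_proj e" for e
  by (rule bounded_linear_line_proj)

lemma line_proj_J: "line_proj e (J x) = J (line_proj e x)"
  using inner_J_left[of e x] by (simp add: line_proj_def J.add J.diff J.scaleR algebra_simps)

lemma inner_line_proj: "inner h (line_proj e g) = inner e g * inner h e + inner (J e) g * inner h (J e)"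
  by (simp add: line_proj_def inner_add_right)

lemma norm_line_proj_le:
  assumes "norm e \<le> 1"
  shows "norm (line_proj e x) \<le> 2 * norm x"
proof -
  have term_le: "norm (inner v x *\<^sub>R v) \<le> norm x" if "norm v \<le> 1" for v
  proof -
    have "norm (inner v x *\<^sub>R v) \<le> (norm v * norm x) * norm v"
      by (simp add: Cauchy_Schwarz_ineq2 mult_right_mono)
    also have "\<dots> = (norm v)\<^sup>2 * norm x" by (simp add: power2_eq_square)
    also have "\<dots> \<le> norm x" using that by (simp add: mult_left_le_one_le power_le_one)
    finally show ?thesis .
  qed
  have "norm (line_proj e x) \<le> norm (inner e x *\<^sub>R e) + norm (inner (J e) x *\<^sub>R J e)"
    unfolding line_proj_def by (rule norm_triangle_ineq)
  also have "\<dots> \<le> norm x + norm x" using term_le[of e] term_le[of "J e"] assms by simp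
  finally show ?thesis by simp
qed

definition line_coupling :: "'h \<Rightarrow> 'h \<Rightarrow> 'h \<Rightarrow> real" where
  "line_coupling e h g = \<bar>inner e g\<bar> * \<bar>inner h e\<bar> + \<bar>inner (J e) g\<bar> * \<bar>inner h (J e)\<bar>"

lemma abs_inner_line_proj_le: "\<bar>inner h (line_proj e g)\<bar> \<le> line_coupling e h g"
  unfolding inner_line_proj line_coupling_def abs_mult[symmetric] by (rule abs_triangle_ineq)

lemma line_coupling_nonneg: "0 \<le> line_coupling e h g"
  by (simp add: line_coupling_def)

lemma line_coupling_le:
  assumes "norm e \<le> 1" "norm h \<le> 1" "norm g \<le> 1"
  shows "line_coupling e h g \<le> 2"
proof -
  have bound: "\<bar>inner a b\<bar> \<le> 1" if "norm a \<le> 1" "norm b \<le> 1" for a b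
    using Cauchy_Schwarz_ineq2[of a b] mult_le_one[OF that(1) norm_ge_zero that(2)] by linarith
  have "\<bar>inner e g\<bar> \<le> 1" "\<bar>inner h e\<bar> \<le> 1" "\<bar>inner (J e) g\<bar> \<le> 1" "\<bar>inner h (J e)\<bar> \<le> 1"
    using bound[of e g] bound[of h e] bound[of "J e" g] bound[of h "J e"] assms by simp_all
  then have "\<bar>inner e g\<bar> * \<bar>inner h e\<bar> \<le> 1" "\<bar>inner (J e) g\<bar> * \<bar>inner h (J e)\<bar> \<le> 1"
    by (simp_all add: mult_le_one)
  then show ?thesis by (simp add: line_coupling_def)
qed

text \<open>AM-GM bounds each summand by four squared coefficients, and each of the four
  sums of squares is at most 1 by Bessel's inequality.\<close>
lemma sum_line_coupling_le:
  assumes e: "norm e \<le> 1" and f: "orthonormal_fam J n f" and g: "orthonormal_fam J n g"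
  shows "(\<Sum>i<n. line_coupling e (f i) (g i) + line_coupling e (J (f i)) (g i)) \<le> 4"
proof -
  define a where "a i = inner e (g i)" for i
  define a' where "a' i = inner (J e) (g i)" for i
  define b where "b i = inner (f i) e" for i
  define b' where "b' i = inner (f i) (J e)" for i
  have amgm: "\<bar>x\<bar> * \<bar>y\<bar> \<le> (x\<^sup>2 + y\<^sup>2) / 2" for x y :: real
    using sum_squares_bound[of "\<bar>x\<bar>" "\<bar>y\<bar>"] by simp
  have "line_coupling e (f i) (g i) + line_coupling e (J (f i)) (g i)
      \<le> (a i)\<^sup>2 + (a' i)\<^sup>2 + (b i)\<^sup>2 + (b' i)\<^sup>2" for i
  proof -
    have "line_coupling e (f i) (g i) + line_coupling e (J (f i)) (g i)
        = \<bar>a i\<bar> * \<bar>b i\<bar> + \<bar>a' i\<bar> * \<bar>b' i\<bar> + \<bar>a i\<bar> * \<bar>b' i\<bar> + \<bar>a' i\<bar> * \<bar>b i\<bar>"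
      using inner_J_left[of "f i" e] by (simp add: line_coupling_def a_def a'_def b_def b'_def)
    also have "\<dots> \<le> ((a i)\<^sup>2 + (b i)\<^sup>2) / 2 + ((a' i)\<^sup>2 + (b' i)\<^sup>2) / 2
        + ((a i)\<^sup>2 + (b' i)\<^sup>2) / 2 + ((a' i)\<^sup>2 + (b i)\<^sup>2) / 2"
      by (intro add_mono amgm)
    finally show ?thesis by (simp add: field_simps)
  qed
  then have "(\<Sum>i<n. line_coupling e (f i) (g i) + line_coupling e (J (f i)) (g i))
      \<le> (\<Sum>i<n. (a i)\<^sup>2) + (\<Sum>i<n. (a' i)\<^sup>2) + (\<Sum>i<n. (b i)\<^sup>2) + (\<Sum>i<n. (b' i)\<^sup>2)"
    by (simp add: sum_mono flip: sum.distrib)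
  moreover have bessel: "(\<Sum>i<n. (inner (u i) v)\<^sup>2) \<le> 1"
    if "orthonormal_fam J n u" "norm v \<le> 1" for u v
  proof -
    have "real_orthonormal n u"
      using that(1) by (simp add: orthonormal_fam_iff real_orthonormal_def)
    then have "(\<Sum>i<n. (inner (u i) v)\<^sup>2) \<le> (norm v)\<^sup>2"
      using norm_orth_proj_Pythagorean[of n u v] by simp
    also have "\<dots> \<le> 1" using that(2) by (simp add: power_le_one)
    finally show ?thesis .
  qed
  ultimately show ?thesis
    using bessel[OF g e] bessel[OF g, of "J e"] bessel[OF f e] bessel[OF f, of "J e"] e
    by (simp add: a_def a'_def b_def b'_def inner_commute)
qed

end

locale trace_bounded_op = complex_hilbert J for J :: "'h::{real_inner,complete_space} \<Rightarrow> 'h" +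
  fixes A :: "'h \<Rightarrow> 'h" and B :: real
  assumes selfadjoint: "selfadjoint_op J A"
    and quadratic_sum_le: "\<And>n w. orthonormal_fam J n w \<Longrightarrow> (\<Sum>i<n. inner (w i) (A (w i))) \<le> B"
begin

sublocale A: bounded_linear A
  using selfadjoint by (simp add: selfadjoint_op_def bounded_op_def)

lemma A_J: "A (J x) = J (A x)"
  using selfadjoint by (simp add: selfadjoint_op_def bounded_op_def)

lemma A_symmetric: "inner x (A y) = inner (A x) y"
  by (rule selfadjoint_op_symmetric[OF selfadjoint])

lemma A_orthocompl:
  assumes "\<And>i. i < m \<Longrightarrow> A (w i) = c i *\<^sub>R w i" "z \<in> orthocompl m w"
  shows "A z \<in> orthocompl m w"
proof -
  have "inner (w i) (A z) = c i * inner (w i) z" "inner (J (w i)) (A z) = c i * inner (J (w i)) z"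
    if "i < m" for i
    using assms(1)[OF that] by (simp_all add: A_symmetric[of _ z] A_J J.scaleR)
  then show ?thesis using assms(2) by (simp add: orthocompl_def)
qed

lemma quadratic_scaleR: "inner (c *\<^sub>R x) (A (c *\<^sub>R x)) = c\<^sup>2 * inner x (A x)"
  by (simp add: A.scaleR power2_eq_square)

lemma quadratic_sgn: "inner (sgn x) (A (sgn x)) = inner x (A x) / (norm x)\<^sup>2"
  by (simp only: sgn_div_norm quadratic_scaleR) (simp add: power_inverse divide_inverse mult.commute)

lemma quadratic_le_of_unit:
  assumes "subspace S" "\<And>y. y \<in> S \<Longrightarrow> norm y = 1 \<Longrightarrow> inner y (A y) \<le> l" "x \<in> S"
  shows "inner x (A x) \<le> l * (norm x)\<^sup>2"
proof (cases "x = 0")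
  case False
  have "sgn x \<in> S" using assms(1,3) by (simp add: sgn_div_norm subspace_scale)
  then have "inner x (A x) / (norm x)\<^sup>2 \<le> l"
    using assms(2)[of "sgn x"] False by (simp add: quadratic_sgn norm_sgn)
  then show ?thesis using False by (simp add: pos_divide_le_eq)
qed simp

lemma abs_quadratic_le:
  obtains K where "K \<ge> 0" "\<And>x. \<bar>inner x (A x)\<bar> \<le> K * (norm x)\<^sup>2"
proof -
  obtain K where K: "K > 0" "\<And>x. norm (A x) \<le> norm x * K"
    using A.pos_bounded by blast
  have "\<bar>inner x (A x)\<bar> \<le> K * (norm x)\<^sup>2" for x
  proof -
    have "\<bar>inner x (A x)\<bar> \<le> norm x * norm (A x)" by (rule Cauchy_Schwarz_ineq2)
    also have "\<dots> \<le> norm x * (norm x * K)" using K(2)[of x] by (simp add: mult_left_mono)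
    finally show ?thesis by (simp add: power2_eq_square algebra_simps)
  qed
  then show ?thesis using that[of K] K(1) by simp
qed

subsection \<open>The largest eigenvalue on an invariant subspace\<close>

definition deficit :: "real \<Rightarrow> 'h \<Rightarrow> real" where
  "deficit l x = l * (norm x)\<^sup>2 - inner x (A x)"

lemma deficit_add_scaleR:
  "deficit l (a + t *\<^sub>R v) = deficit l a + 2 * t * (l * inner a v - inner a (A v)) + t\<^sup>2 * deficit l v"
proof -
  have "inner v (A a) = inner a (A v)" by (metis A_symmetric inner_commute)
  then show ?thesis
    unfolding deficit_def power2_norm_eq_inner
    by (simp add: inner_add_left inner_add_right A.add A.scaleR inner_commute[of v a]
        power2_eq_square algebra_simps)
qed

lemma deficit_parallelogram:
  "deficit l (a - b) + deficit l (a + b) = 2 * deficit l a + 2 * deficit l b"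
  using deficit_add_scaleR[of l a 1 b] deficit_add_scaleR[of l a "-1" b] by simp

lemma deficit_le:
  obtains C where "C \<ge> 0" "\<And>x. deficit l x \<le> C * (norm x)\<^sup>2"
proof -
  obtain K where K: "K \<ge> 0" "\<And>x. \<bar>inner x (A x)\<bar> \<le> K * (norm x)\<^sup>2"
    using abs_quadratic_le by blast
  have "deficit l x \<le> (\<bar>l\<bar> + K) * (norm x)\<^sup>2" for x
  proof -
    have "l * (norm x)\<^sup>2 \<le> \<bar>l\<bar> * (norm x)\<^sup>2" by (simp add: mult_right_mono)
    moreover have "- inner x (A x) \<le> K * (norm x)\<^sup>2" using K(2)[of x] by linarith
    ultimately show ?thesis by (simp add: deficit_def distrib_right)
  qed
  then show ?thesis using that[of "\<bar>l\<bar> + K"] K(1) by simp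
qed

lemma card_mult_le_of_quadratic_ge:
  assumes "orthonormal_fam J m w" "\<And>i. i < m \<Longrightarrow> c \<le> inner (w i) (A (w i))"
  shows "real m * c \<le> B"
proof -
  have "real m * c = (\<Sum>i<m. c)" by simp
  also have "\<dots> \<le> (\<Sum>i<m. inner (w i) (A (w i)))" using assms(2) by (intro sum_mono) auto
  also have "\<dots> \<le> B" by (rule quadratic_sum_le[OF assms(1)])
  finally show ?thesis .
qed

text \<open>Greedy construction: every new direction contributes at least c to a sum of
  quadratic values that the trace bound caps at B.\<close>
lemma exists_orthonormal_fam_quadratic_small:
  assumes S: "subspace S" and c: "c > 0"
  obtains m w where "orthonormal_fam J m w" "\<And>i. i < m \<Longrightarrow> w i \<in> S"
    "\<And>z. z \<in> S \<Longrightarrow> z \<in> orthocompl m w \<Longrightarrow> inner z (A z) \<le> c * (norm z)\<^sup>2"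
proof -
  have "\<exists>m w. orthonormal_fam J m w \<and> (\<forall>i<m. w i \<in> S) \<and>
    (\<forall>z\<in>S \<inter> orthocompl m w. inner z (A z) \<le> c * (norm z)\<^sup>2)"
  proof (rule ccontr)
    assume none: "\<not> ?thesis"
    have "\<exists>w. orthonormal_fam J m w \<and> (\<forall>i<m. w i \<in> S \<and> c \<le> inner (w i) (A (w i)))" for m
    proof (induction m)
      case 0
      then show ?case by (auto simp: orthonormal_fam_def)
    next
      case (Suc m)
      then obtain w where w: "orthonormal_fam J m w" "\<forall>i<m. w i \<in> S \<and> c \<le> inner (w i) (A (w i))"
        by blast
      with none obtain z where z: "z \<in> S" "z \<in> orthocompl m w" "c * (norm z)\<^sup>2 < inner z (A z)"
        by force
      then have "z \<noteq> 0" by auto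
      have "sgn z \<in> S" "sgn z \<in> orthocompl m w"
        using z subspace_orthocompl S by (simp_all add: sgn_div_norm subspace_scale)
      moreover have "c < inner (sgn z) (A (sgn z))"
        using z(3) \<open>z \<noteq> 0\<close> by (simp add: quadratic_sgn pos_less_divide_eq)
      ultimately have "orthonormal_fam J (Suc m) (w(m := sgn z))"
        "\<forall>i<Suc m. (w(m := sgn z)) i \<in> S \<and> c \<le> inner ((w(m := sgn z)) i) (A ((w(m := sgn z)) i))"
        using orthonormal_fam_extend[OF w(1)] w(2) \<open>z \<noteq> 0\<close> by (auto simp: norm_sgn less_Suc_eq)
      then show ?case by blast
    qed
    moreover obtain m :: nat where "B < real m * c" using ex_less_of_nat_mult[OF c] by blast
    ultimately show False using card_mult_le_of_quadratic_ge by (meson not_le)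
  qed
  then show ?thesis using that by blast
qed

lemma norm_diff_power2_le_deficit:
  assumes S: "subspace S" and nonneg: "\<And>x. x \<in> S \<Longrightarrow> 0 \<le> deficit l x"
    and C: "\<And>x. deficit l x \<le> C * (norm x)\<^sup>2" and l: "l > 0"
    and in_S: "a \<in> S" "b \<in> S" "d \<in> S"
    and z: "a - b = d + z" "l / 2 * (norm z)\<^sup>2 \<le> deficit l z"
  shows "(norm (a - b))\<^sup>2 \<le> 2 * (norm d)\<^sup>2 + 4 / l * (4 * deficit l a + 4 * deficit l b + 2 * C * (norm d)\<^sup>2)"
proof -
  have "a - b \<in> S" "a + b \<in> S" "a - b + d \<in> S"
    using in_S S by (simp_all add: subspace_add subspace_diff)
  then have "deficit l (a - b) \<le> 2 * deficit l a + 2 * deficit l b"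
    "deficit l ((a - b) - d) \<le> 2 * deficit l (a - b) + 2 * deficit l d"
    using deficit_parallelogram[of l a b] deficit_parallelogram[of l "a - b" d] nonneg by fastforce+
  then have "l / 2 * (norm z)\<^sup>2 \<le> 4 * deficit l a + 4 * deficit l b + 2 * C * (norm d)\<^sup>2"
    using z C[of d] by (simp add: algebra_simps)
  then have "2 * (norm z)\<^sup>2 \<le> 4 / l * (4 * deficit l a + 4 * deficit l b + 2 * C * (norm d)\<^sup>2)"
    using l by (simp add: field_simps)
  moreover have "(norm (a - b))\<^sup>2 \<le> 2 * (norm d)\<^sup>2 + 2 * (norm z)\<^sup>2"
    using norm_diff_power2_le[of d "- z"] z(1) by simp
  ultimately show ?thesis by linarith
qed

text \<open>On the complex orthogonal complement of w the deficit is coercive, so a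
  minimising sequence whose components along the finitely many w i converge is Cauchy.\<close>
lemma Cauchy_if_deficit_tendsto_0:
  assumes S: "subspace S" "\<And>x. x \<in> S \<Longrightarrow> J x \<in> S" and l: "l > 0"
    and nonneg: "\<And>x. x \<in> S \<Longrightarrow> 0 \<le> deficit l x"
    and w: "\<And>i. i < m \<Longrightarrow> w i \<in> S" "orthonormal_fam J m w"
      "\<And>z. z \<in> S \<Longrightarrow> z \<in> orthocompl m w \<Longrightarrow> inner z (A z) \<le> l / 2 * (norm z)\<^sup>2"
    and x: "\<And>n. x n \<in> S" "(\<lambda>n. deficit l (x n)) \<longlonglongrightarrow> 0"
    and y: "(\<lambda>n. orth_proj (2*m) (realified w) (x n)) \<longlonglongrightarrow> p"
  shows "Cauchy x"
proof -
  obtain C where C: "C \<ge> 0" "\<And>x. deficit l x \<le> C * (norm x)\<^sup>2" using deficit_le[of l] by blast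
  define y where "y n = orth_proj (2*m) (realified w) (x n)" for n
  define Y where "Y n = (norm (y n - p))\<^sup>2" for n
  define \<beta> where "\<beta> n = 4 * Y n + 4 / l * (4 * deficit l (x n) + 4 * C * Y n)" for n
  have "(\<lambda>n. y n - p) \<longlonglongrightarrow> 0" using LIM_zero[OF y] by (simp add: y_def)
  then have "Y \<longlonglongrightarrow> (norm (0::'h))\<^sup>2" unfolding Y_def by (intro tendsto_intros)
  then have "Y \<longlonglongrightarrow> 0" by simp
  then have "\<beta> \<longlonglongrightarrow> 4 * 0 + 4 / l * (4 * 0 + 4 * C * 0)"
    unfolding \<beta>_def by (intro tendsto_intros x(2))
  moreover have "(dist (x a) (x b))\<^sup>2 \<le> \<beta> a + \<beta> b" for a b
  proof -
    have y_in: "y n \<in> S" for n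
      unfolding y_def by (rule orth_proj_realified_in_subspace[OF S w(1)])
    have "x a - y a - (x b - y b) \<in> S \<inter> orthocompl m w"
      using orth_proj_realified_residual[OF w(2)] x(1) y_in S(1) subspace_orthocompl
      by (simp add: y_def subspace_diff)
    then have z: "l / 2 * (norm (x a - y a - (x b - y b)))\<^sup>2 \<le> deficit l (x a - y a - (x b - y b))"
      using w(3) by (simp add: deficit_def)
    have "x a - x b = (y a - y b) + (x a - y a - (x b - y b))" by simp
    from norm_diff_power2_le_deficit[OF S(1) nonneg C(2) l x(1) x(1) subspace_diff[OF S(1) y_in y_in]
        this z]
    have "(norm (x a - x b))\<^sup>2 \<le> 2 * (norm (y a - y b))\<^sup>2
        + 4 / l * (4 * deficit l (x a) + 4 * deficit l (x b) + 2 * C * (norm (y a - y b))\<^sup>2)" .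
    moreover have "(norm (y a - y b))\<^sup>2 \<le> 2 * Y a + 2 * Y b"
      using norm_diff_power2_le[of "y a - p" "y b - p"] by (simp add: Y_def)
    then have "4 / l * (4 * deficit l (x a) + 4 * deficit l (x b) + 2 * C * (norm (y a - y b))\<^sup>2)
        \<le> 4 / l * (4 * deficit l (x a) + 4 * deficit l (x b) + 2 * C * (2 * Y a + 2 * Y b))"
      using l C(1) by (intro mult_left_mono add_left_mono) simp_all
    moreover have "\<beta> a + \<beta> b
        = 4 * Y a + 4 * Y b + 4 / l * (4 * deficit l (x a) + 4 * deficit l (x b) + 2 * C * (2 * Y a + 2 * Y b))"
      by (simp add: \<beta>_def algebra_simps)
    ultimately show ?thesis
      using \<open>(norm (y a - y b))\<^sup>2 \<le> 2 * Y a + 2 * Y b\<close> by (simp add: dist_norm)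
  qed
  ultimately show ?thesis by (intro Cauchy_if_dist_power2_le) simp_all
qed

lemma deficit_eq_0_attained:
  assumes S: "subspace S" "closed S" "\<And>x. x \<in> S \<Longrightarrow> J x \<in> S" and l: "l > 0"
    and nonneg: "\<And>x. x \<in> S \<Longrightarrow> 0 \<le> deficit l x"
    and x: "\<And>n. x n \<in> S" "\<And>n. norm (x n) = 1" "(\<lambda>n. deficit l (x n)) \<longlonglongrightarrow> 0"
  shows "\<exists>e\<in>S. norm e = 1 \<and> deficit l e = 0"
proof -
  obtain m w where w: "orthonormal_fam J m w" "\<And>i. i < m \<Longrightarrow> w i \<in> S"
    "\<And>z. z \<in> S \<Longrightarrow> z \<in> orthocompl m w \<Longrightarrow> inner z (A z) \<le> l / 2 * (norm z)\<^sup>2"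
    using exists_orthonormal_fam_quadratic_small[OF S(1), of "l / 2"] l by auto
  have "\<And>n. norm (x n) \<le> 1" using x(2) by simp
  then obtain r p where r: "strict_mono r" "(\<lambda>n. orth_proj (2*m) (realified w) (x (r n))) \<longlonglongrightarrow> p"
    by (rule orth_proj_convergent_subseq[OF real_orthonormal_realified[OF w(1)]])
  have "(\<lambda>n. deficit l (x (r n))) \<longlonglongrightarrow> 0"
    using LIMSEQ_subseq_LIMSEQ[OF x(3) r(1)] by (simp add: o_def)
  moreover have "\<And>n. x (r n) \<in> S" using x(1) by simp
  ultimately have "Cauchy (\<lambda>n. x (r n))"
    using Cauchy_if_deficit_tendsto_0[OF S(1,3) l nonneg w(2,1,3), where x = "\<lambda>n. x (r n)"] r(2)
    by simp
  then obtain e where e: "(\<lambda>n. x (r n)) \<longlonglongrightarrow> e" using Cauchy_convergent_iff convergent_def by blast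
  have "e \<in> S" using closed_sequentially[OF S(2) _ e] x(1) by simp
  moreover have "norm e = 1"
    using LIMSEQ_unique[OF tendsto_norm[OF e]] x(2) by simp
  moreover have "(\<lambda>n. deficit l (x (r n))) \<longlonglongrightarrow> deficit l e"
    unfolding deficit_def by (intro tendsto_intros A.tendsto e)
  then have "deficit l e = 0"
    using LIMSEQ_unique \<open>(\<lambda>n. deficit l (x (r n))) \<longlonglongrightarrow> 0\<close> by blast
  ultimately show ?thesis by blast
qed

lemma eigenvector_if_deficit_eq_0:
  assumes S: "subspace S" "\<And>x. x \<in> S \<Longrightarrow> A x \<in> S"
    and nonneg: "\<And>x. x \<in> S \<Longrightarrow> 0 \<le> deficit l x"
    and e: "e \<in> S" "deficit l e = 0"
  shows "A e = l *\<^sub>R e"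
proof -
  have first_variation: "l * inner e u - inner e (A u) = 0" if "u \<in> S" for u
  proof (rule linear_coeff_eq_0_if_quadratic_nonneg)
    fix t :: real
    have "e + t *\<^sub>R u \<in> S" using e(1) that S(1) by (simp add: subspace_add subspace_scale)
    then show "0 \<le> 2 * t * (l * inner e u - inner e (A u)) + t\<^sup>2 * deficit l u"
      using nonneg[of "e + t *\<^sub>R u"] deficit_add_scaleR[of l e t u] e(2) by simp
  qed
  define u where "u = l *\<^sub>R e - A e"
  have "u \<in> S" using e(1) S by (simp add: u_def subspace_diff subspace_scale)
  moreover have "l * inner e u - inner e (A u) = inner u u"
    by (simp add: u_def inner_diff_left A_symmetric[of e])
  ultimately have "inner u u = 0" using first_variation by simp
  then show ?thesis by (simp add: u_def)
qed

definition is_top_eigvec :: "'h set \<Rightarrow> 'h \<Rightarrow> bool" where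
  "is_top_eigvec S e \<longleftrightarrow> e \<in> S \<and> norm e = 1 \<and> A e = inner e (A e) *\<^sub>R e \<and> 0 < inner e (A e) \<and>
     (\<forall>x\<in>S. inner x (A x) \<le> inner e (A e) * (norm x)\<^sup>2)"

lemma exists_deficit_minimising_sequence:
  assumes S: "subspace S" and pos: "\<exists>x\<in>S. norm x = 1 \<and> 0 < inner x (A x)"
  shows "\<exists>l x. l > 0 \<and> (\<forall>y\<in>S. 0 \<le> deficit l y) \<and> (\<forall>n. x n \<in> S \<and> norm (x n) = 1) \<and>
    (\<lambda>n. deficit l (x n)) \<longlonglongrightarrow> 0"
proof -
  define Q where "Q = {inner x (A x) | x. x \<in> S \<and> norm x = 1}"
  define l where "l = Sup Q"
  obtain K where K: "\<And>x. \<bar>inner x (A x)\<bar> \<le> K * (norm x)\<^sup>2" using abs_quadratic_le by blast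
  have bdd: "bdd_above Q"
  proof (rule bdd_aboveI)
    fix q assume "q \<in> Q"
    then obtain x where "q = inner x (A x)" "norm x = 1" by (auto simp: Q_def)
    then show "q \<le> K" using K[of x] by simp
  qed
  have "Q \<noteq> {}" using pos by (auto simp: Q_def)
  have upper: "inner x (A x) \<le> l" if "x \<in> S" "norm x = 1" for x
    unfolding l_def using that by (intro cSup_upper bdd) (auto simp: Q_def)
  have "l > 0"
  proof -
    obtain x where "x \<in> S" "norm x = 1" "0 < inner x (A x)" using pos by blast
    then show ?thesis using upper by fastforce
  qed
  have nonneg: "0 \<le> deficit l x" if "x \<in> S" for x
    using quadratic_le_of_unit[OF S upper that] by (simp add: deficit_def)
  have "\<exists>x. x \<in> S \<and> norm x = 1 \<and> l - inverse (real (Suc n)) < inner x (A x)" for n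
  proof -
    have "l - inverse (real (Suc n)) < Sup Q" by (simp add: l_def)
    then obtain q where "q \<in> Q" "l - inverse (real (Suc n)) < q"
      using less_cSup_iff[OF \<open>Q \<noteq> {}\<close> bdd] by blast
    then show ?thesis by (auto simp: Q_def)
  qed
  then obtain x where x: "\<And>n. x n \<in> S" "\<And>n. norm (x n) = 1"
    "\<And>n. l - inverse (real (Suc n)) < inner (x n) (A (x n))" by metis
  have "(\<lambda>n. deficit l (x n)) \<longlonglongrightarrow> 0"
  proof (rule tendsto_sandwich[of "\<lambda>_. 0" _ _ "\<lambda>n. inverse (real (Suc n))"])
    show "\<forall>\<^sub>F n in sequentially. 0 \<le> deficit l (x n)" using nonneg x(1) by simp
    have "deficit l (x n) \<le> inverse (real (Suc n))" for n
      using x(2)[of n] x(3)[of n] by (auto simp: deficit_def)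
    then show "\<forall>\<^sub>F n in sequentially. deficit l (x n) \<le> inverse (real (Suc n))"
      by (simp add: always_eventually)
  qed (rule tendsto_const LIMSEQ_inverse_real_of_nat)+
  then show ?thesis using \<open>l > 0\<close> nonneg x(1,2) by blast
qed

lemma exists_top_eigvec:
  assumes S: "subspace S" "closed S" "\<And>x. x \<in> S \<Longrightarrow> J x \<in> S" "\<And>x. x \<in> S \<Longrightarrow> A x \<in> S"
    and pos: "\<exists>x\<in>S. norm x = 1 \<and> 0 < inner x (A x)"
  shows "\<exists>e. is_top_eigvec S e"
proof -
  obtain l x where l: "l > 0" and nonneg: "\<forall>y\<in>S. 0 \<le> deficit l y"
    and x: "\<forall>n. x n \<in> S \<and> norm (x n) = 1" "(\<lambda>n. deficit l (x n)) \<longlonglongrightarrow> 0"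
    using exists_deficit_minimising_sequence[OF S(1) pos] by blast
  then obtain e where e: "e \<in> S" "norm e = 1" "deficit l e = 0"
    using deficit_eq_0_attained[OF S(1-3) l, where x = x] nonneg x by auto
  then have "inner e (A e) = l" by (simp add: deficit_def)
  moreover have "A e = l *\<^sub>R e"
    using eigenvector_if_deficit_eq_0[OF S(1,4) _ e(1,3)] nonneg by simp
  ultimately have "is_top_eigvec S e"
    using e(1,2) l nonneg by (simp add: is_top_eigvec_def deficit_def)
  then show ?thesis ..
qed

subsection \<open>The sequence of positive eigenvalues\<close>

text \<open>The junk value 0, taken when the form is nowhere positive on S, makes the eigenvector
  sequence 0 from the first such k on. The list of predecessors turns the course-of-values
  recursion for eigvec into a primitive one.\<close>
definition top_eigvec :: "'h set \<Rightarrow> 'h" where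
  "top_eigvec S = (if \<exists>x\<in>S. norm x = 1 \<and> 0 < inner x (A x) then SOME e. is_top_eigvec S e else 0)"

primrec eigvec_list :: "nat \<Rightarrow> 'h list" where
  "eigvec_list 0 = []"
| "eigvec_list (Suc k) = eigvec_list k @ [top_eigvec (orthocompl k ((!) (eigvec_list k)))]"

definition eigvec :: "nat \<Rightarrow> 'h" where
  "eigvec k = top_eigvec (orthocompl k ((!) (eigvec_list k)))"

definition eigval :: "nat \<Rightarrow> real" where
  "eigval k = inner (eigvec k) (A (eigvec k))"

lemma eigvec_list_eq: "eigvec_list k = map eigvec [0..<k]"
  by (induction k) (simp_all add: eigvec_def)

lemma eigvec_eq: "eigvec k = top_eigvec (orthocompl k eigvec)"
proof -
  have "orthocompl k ((!) (eigvec_list k)) = orthocompl k eigvec"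
    by (rule orthocompl_cong) (simp add: eigvec_list_eq)
  then show ?thesis by (simp add: eigvec_def)
qed

lemma eigvec_props:
  "A (eigvec k) = eigval k *\<^sub>R eigvec k \<and> eigvec k \<in> orthocompl k eigvec \<and>
   (\<forall>x\<in>orthocompl k eigvec. inner x (A x) \<le> eigval k * (norm x)\<^sup>2) \<and>
   (eigvec k = 0 \<or> norm (eigvec k) = 1 \<and> 0 < eigval k)"
proof (induction k rule: less_induct)
  case (less k)
  let ?S = "orthocompl k eigvec"
  show ?case
  proof (cases "\<exists>x\<in>?S. norm x = 1 \<and> 0 < inner x (A x)")
    case True
    have "A (eigvec i) = eigval i *\<^sub>R eigvec i" if "i < k" for i
      using less[OF that] by blast
    then have "A x \<in> ?S" if "x \<in> ?S" for x using that by (rule A_orthocompl)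
    then obtain e where "is_top_eigvec ?S e"
      using exists_top_eigvec[OF subspace_orthocompl closed_orthocompl J_orthocompl _ True] by blast
    then have "is_top_eigvec ?S (SOME e. is_top_eigvec ?S e)" by (rule someI)
    then have "is_top_eigvec ?S (eigvec k)"
      unfolding eigvec_eq[of k] top_eigvec_def using True by simp
    then show ?thesis by (simp add: is_top_eigvec_def eigval_def)
  next
    case False
    then have "\<And>y. y \<in> ?S \<Longrightarrow> norm y = 1 \<Longrightarrow> inner y (A y) \<le> 0" by auto
    then have "inner x (A x) \<le> 0" if "x \<in> ?S" for x
      using quadratic_le_of_unit[OF subspace_orthocompl _ that, of 0] by simp
    moreover have "eigvec k = 0"
      unfolding eigvec_eq[of k] top_eigvec_def using False by (rule if_not_P)
    ultimately show ?thesis by (simp add: eigval_def orthocompl_def)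
  qed
qed

lemma eigvec_eigval: "A (eigvec k) = eigval k *\<^sub>R eigvec k"
  using eigvec_props by blast

lemma eigvec_orthocompl: "eigvec k \<in> orthocompl k eigvec"
  using eigvec_props by blast

lemma quadratic_le_eigval: "x \<in> orthocompl k eigvec \<Longrightarrow> inner x (A x) \<le> eigval k * (norm x)\<^sup>2"
  using eigvec_props by blast

lemma eigvec_cases: "eigvec k = 0 \<or> norm (eigvec k) = 1 \<and> 0 < eigval k"
  using eigvec_props by blast

lemma eigval_nonneg: "0 \<le> eigval k"
  using eigvec_cases[of k] by (auto simp: eigval_def)

lemma norm_eigvec_le: "norm (eigvec k) \<le> 1"
  using eigvec_cases[of k] by auto

lemma eigvec_eq_0_Suc:
  assumes "eigvec k = 0"
  shows "eigvec (Suc k) = 0"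
proof -
  have "orthocompl (Suc k) eigvec = orthocompl k eigvec"
    using assms by (auto simp: orthocompl_def less_Suc_eq)
  moreover have "eigval k = 0" using assms by (simp add: eigval_def)
  ultimately have "\<not> (\<exists>x\<in>orthocompl (Suc k) eigvec. norm x = 1 \<and> 0 < inner x (A x))"
    using quadratic_le_eigval[of _ k] by force
  then show ?thesis unfolding eigvec_eq[of "Suc k"] top_eigvec_def by (rule if_not_P)
qed

lemma eigvec_eq_0_mono:
  assumes "eigvec k = 0" "k \<le> j"
  shows "eigvec j = 0"
  using assms(2) by (induction j rule: dec_induct) (simp_all add: assms(1) eigvec_eq_0_Suc)

lemma orthonormal_fam_eigvec:
  assumes "\<forall>k<M. eigvec k \<noteq> 0"
  shows "orthonormal_fam J M eigvec"
  unfolding orthonormal_fam_iff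
proof (intro allI impI)
  fix i j assume "i < M" "j < M"
  show "inner (eigvec i) (eigvec j) = (if i = j then 1 else 0) \<and> inner (J (eigvec i)) (eigvec j) = 0"
  proof (cases i j rule: linorder_cases)
    case less
    then show ?thesis using eigvec_orthocompl[of j] by (simp add: orthocompl_def)
  next
    case equal
    have "norm (eigvec i) = 1" using assms \<open>i < M\<close> eigvec_cases by blast
    then show ?thesis using equal by (simp flip: power2_norm_eq_inner)
  next
    case greater
    then have "inner (eigvec j) (eigvec i) = 0" "inner (J (eigvec j)) (eigvec i) = 0"
      using eigvec_orthocompl[of i] by (simp_all add: orthocompl_def)
    then show ?thesis
      using greater inner_J_left[of "eigvec i" "eigvec j"] inner_J_left[of "eigvec j" "eigvec i"]
      by (simp add: inner_commute)
  qed
qed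

lemma eigvec_nonzero_prefix:
  obtains M where "M \<le> N" "\<forall>k<M. eigvec k \<noteq> 0" "\<And>k. M \<le> k \<Longrightarrow> eigvec k = 0 \<or> N \<le> k"
proof (cases "\<exists>k<N. eigvec k = 0")
  case True
  define M where "M = (LEAST k. eigvec k = 0)"
  have "eigvec M = 0" unfolding M_def using True by (auto intro: LeastI_ex)
  moreover have "M \<le> N" using True unfolding M_def by (meson Least_le less_imp_le order_trans)
  moreover have "\<forall>k<M. eigvec k \<noteq> 0" unfolding M_def using not_less_Least by blast
  ultimately show ?thesis using that eigvec_eq_0_mono by blast
next
  case False
  then show ?thesis using that[of N] by auto
qed

lemma sum_eigval_le: "(\<Sum>k<n. eigval k) \<le> B"
proof -
  obtain M where M: "M \<le> n" "\<forall>k<M. eigvec k \<noteq> 0" "\<And>k. M \<le> k \<Longrightarrow> eigvec k = 0 \<or> n \<le> k"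
    using eigvec_nonzero_prefix[of n] by blast
  have "(\<Sum>k<n. eigval k) = (\<Sum>k<M. eigval k)"
  proof (rule sum.mono_neutral_right)
    show "\<forall>i\<in>{..<n} - {..<M}. eigval i = 0"
    proof
      fix i assume "i \<in> {..<n} - {..<M}"
      then have "eigvec i = 0" using M(3)[of i] by auto
      then show "eigval i = 0" by (simp add: eigval_def)
    qed
  qed (use M(1) in auto)
  also have "\<dots> \<le> B"
    using quadratic_sum_le[OF orthonormal_fam_eigvec[OF M(2)]] by (simp add: eigval_def)
  finally show ?thesis .
qed

lemma summable_eigval: "summable eigval"
  using eigval_nonneg sum_eigval_le by (intro summableI_nonneg_bounded) auto

subsection \<open>A positive trace-class majorant\<close>

definition majorant :: "'h \<Rightarrow> 'h" where
  "majorant x = (\<Sum>i. eigval i *\<^sub>R line_proj (eigvec i) x)"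

lemma summable_eigval_line_proj: "summable (\<lambda>i. eigval i *\<^sub>R line_proj (eigvec i) x)"
proof (rule summable_comparison_test_complete)
  show "summable (\<lambda>i. eigval i * (2 * norm x))" by (rule summable_mult2[OF summable_eigval])
  show "norm (eigval i *\<^sub>R line_proj (eigvec i) x) \<le> eigval i * (2 * norm x)" for i
    using norm_line_proj_le[OF norm_eigvec_le, of i x] eigval_nonneg[of i] by (simp add: mult_left_mono)
qed

lemma bounded_linear_majorant: "bounded_linear majorant"
proof (rule bounded_linear_intro[where K = "2 * suminf eigval"])
  fix x y
  show "majorant (x + y) = majorant x + majorant y"
    unfolding majorant_def line_proj.add scaleR_add_right
    by (rule suminf_add[OF summable_eigval_line_proj summable_eigval_line_proj, symmetric])
next
  fix c x
  show "majorant (c *\<^sub>R x) = c *\<^sub>R majorant x"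
    unfolding majorant_def line_proj.scaleR scaleR_left_commute[of _ c]
    by (rule bounded_linear.suminf[OF bounded_linear_scaleR_right summable_eigval_line_proj, symmetric])
next
  fix x
  have "norm (majorant x) \<le> (\<Sum>i. eigval i * (2 * norm x))"
    unfolding majorant_def
    using norm_line_proj_le[OF norm_eigvec_le] eigval_nonneg
    by (intro norm_suminf_le_complete summable_mult2[OF summable_eigval]) (auto intro: mult_left_mono)
  also have "\<dots> = suminf eigval * (2 * norm x)"
    by (rule suminf_mult2[OF summable_eigval, symmetric])
  also have "\<dots> = norm x * (2 * suminf eigval)" by (simp add: mult_ac)
  finally show "norm (majorant x) \<le> norm x * (2 * suminf eigval)" .
qed

lemma majorant_J: "majorant (J x) = J (majorant x)"
  unfolding majorant_def line_proj_J J.scaleR[symmetric]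
  by (rule J.suminf[OF summable_eigval_line_proj, symmetric])

lemma inner_majorant: "inner y (majorant x) = (\<Sum>i. eigval i * inner y (line_proj (eigvec i) x))"
  and summable_inner_majorant: "summable (\<lambda>i. eigval i * inner y (line_proj (eigvec i) x))"
  using bounded_linear.suminf[OF bounded_linear_inner_right summable_eigval_line_proj]
    bounded_linear.summable[OF bounded_linear_inner_right summable_eigval_line_proj]
  by (simp_all add: majorant_def)

lemma selfadjoint_majorant: "selfadjoint_op J majorant"
proof -
  have "inner y (majorant x) = inner (majorant y) x" for x y
    unfolding inner_majorant inner_commute[of "majorant y" x]
    by (simp add: inner_line_proj inner_commute mult.commute)
  then show ?thesis
    using bounded_linear_majorant majorant_J by (simp add: selfadjoint_op_iff bounded_op_def)
qed

lemma quadratic_majorant: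
  "inner x (majorant x) = (\<Sum>i. eigval i * ((inner (eigvec i) x)\<^sup>2 + (inner (J (eigvec i)) x)\<^sup>2))"
  and summable_quadratic_majorant:
  "summable (\<lambda>i. eigval i * ((inner (eigvec i) x)\<^sup>2 + (inner (J (eigvec i)) x)\<^sup>2))"
  using inner_majorant[of x x] summable_inner_majorant[of x x]
  by (simp_all add: inner_line_proj power2_eq_square inner_commute)

lemma quadratic_majorant_nonneg: "0 \<le> inner x (majorant x)"
  unfolding quadratic_majorant
  by (rule suminf_nonneg[OF summable_quadratic_majorant]) (simp add: eigval_nonneg)

lemma orthocompl_eigvec_extend:
  assumes "\<And>k. M \<le> k \<Longrightarrow> eigvec k = 0 \<or> N \<le> k" "z \<in> orthocompl M eigvec"
  shows "z \<in> orthocompl N eigvec"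
  unfolding orthocompl_def
proof (intro CollectI allI impI)
  fix i assume "i < N"
  show "inner (eigvec i) z = 0 \<and> inner (J (eigvec i)) z = 0"
  proof (cases "i < M")
    case True
    then show ?thesis using assms(2) by (simp add: orthocompl_def)
  next
    case False
    then have "eigvec i = 0" using assms(1)[of i] \<open>i < N\<close> by auto
    then show ?thesis by simp
  qed
qed

lemma quadratic_orth_proj_eigvec:
  assumes fam: "orthonormal_fam J M eigvec"
  shows "inner (orth_proj (2*M) (realified eigvec) x) (A (orth_proj (2*M) (realified eigvec) x))
    = (\<Sum>i<M. eigval i * ((inner (eigvec i) x)\<^sup>2 + (inner (J (eigvec i)) x)\<^sup>2))"
proof -
  define u where "u = realified eigvec"
  have "A (orth_proj (2*M) u x) = (\<Sum>j<2*M. (inner (u j) x * eigval (j div 2)) *\<^sub>R u j)"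
    unfolding orth_proj_def A.sum
  proof (rule sum.cong)
    show "A (inner (u j) x *\<^sub>R u j) = (inner (u j) x * eigval (j div 2)) *\<^sub>R u j" for j
      by (cases "even j") (simp_all add: u_def realified_def A.scaleR eigvec_eigval A_J J.scaleR)
  qed simp
  then have "inner (orth_proj (2*M) u x) (A (orth_proj (2*M) u x))
      = (\<Sum>j<2*M. inner (u j) x * (inner (u j) x * eigval (j div 2)))"
    unfolding orth_proj_def
    by (simp only: inner_real_orthonormal_sums[OF real_orthonormal_realified[OF fam], folded u_def])
  also have "\<dots> = (\<Sum>i<M. eigval i * ((inner (eigvec i) x)\<^sup>2 + (inner (J (eigvec i)) x)\<^sup>2))"
    unfolding u_def sum_lessThan_double by (simp add: realified_def power2_eq_square algebra_simps)
  finally show ?thesis by (simp add: u_def)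
qed

text \<open>Split x along the nonzero eigenvectors among the first N; the cross terms
  vanish by invariance, and on the orthogonal complement the quadratic form is bounded
  by the N-th eigenvalue.\<close>
lemma quadratic_le_majorant_plus: "inner x (A x) \<le> inner x (majorant x) + eigval N * (norm x)\<^sup>2"
proof -
  obtain M where M: "M \<le> N" "\<forall>k<M. eigvec k \<noteq> 0" "\<And>k. M \<le> k \<Longrightarrow> eigvec k = 0 \<or> N \<le> k"
    using eigvec_nonzero_prefix[of N] by blast
  have fam: "orthonormal_fam J M eigvec" by (rule orthonormal_fam_eigvec[OF M(2)])
  define y where "y = orth_proj (2*M) (realified eigvec) x"
  define r where "r = x - y"
  have r_perp: "r \<in> orthocompl M eigvec"
    unfolding r_def y_def by (rule orth_proj_realified_residual[OF fam])
  then have "inner r (A r) \<le> eigval N * (norm r)\<^sup>2"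
    by (intro quadratic_le_eigval orthocompl_eigvec_extend[OF M(3)])
  also have "\<dots> \<le> eigval N * (norm x)\<^sup>2"
    using norm_orth_proj_Pythagorean[OF real_orthonormal_realified[OF fam], of x] eigval_nonneg
    by (intro mult_left_mono) (simp_all add: r_def y_def sum_nonneg)
  finally have rAr: "inner r (A r) \<le> eigval N * (norm x)\<^sup>2" .
  have "A r \<in> orthocompl M eigvec" by (rule A_orthocompl[OF eigvec_eigval r_perp])
  then have yAr: "inner y (A r) = 0" and rAy: "inner r (A y) = 0"
    using inner_orth_proj_realified_orthocompl by (simp_all add: y_def A_symmetric[of r] inner_commute)
  have "inner y (A y) \<le> inner x (majorant x)"
    unfolding y_def quadratic_orth_proj_eigvec[OF fam] quadratic_majorant
    by (rule sum_le_suminf[OF summable_quadratic_majorant]) (simp_all add: eigval_nonneg)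
  moreover have "inner x (A x) = inner y (A y) + inner y (A r) + inner r (A y) + inner r (A r)"
    by (simp add: r_def A.diff inner_diff_left inner_diff_right)
  ultimately show ?thesis using yAr rAy rAr by linarith
qed

lemma quadratic_le_majorant: "inner x (A x) \<le> inner x (majorant x)"
proof (rule LIMSEQ_le_const)
  show "(\<lambda>N. inner x (majorant x) + eigval N * (norm x)\<^sup>2) \<longlonglongrightarrow> inner x (majorant x)"
    using tendsto_add[OF tendsto_const tendsto_mult_left_zero[OF summable_LIMSEQ_zero[OF summable_eigval]]]
    by simp
  show "\<exists>N. \<forall>n\<ge>N. inner x (A x) \<le> inner x (majorant x) + eigval n * (norm x)\<^sup>2"
    using quadratic_le_majorant_plus by blast
qed

lemma summable_eigval_line_coupling:
  assumes "norm h \<le> 1" "norm g \<le> 1"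
  shows "summable (\<lambda>k. eigval k * line_coupling (eigvec k) h g)"
proof (rule summable_comparison_test_complete)
  show "norm (eigval k * line_coupling (eigvec k) h g) \<le> 2 * eigval k" for k
    using mult_left_mono[OF line_coupling_le[OF norm_eigvec_le assms] eigval_nonneg[of k]]
      line_coupling_nonneg[of "eigvec k" h g] eigval_nonneg[of k]
    by (simp add: abs_mult mult.commute)
qed (rule summable_mult[OF summable_eigval])

lemma abs_inner_majorant_le:
  assumes "norm h \<le> 1" "norm g \<le> 1"
  shows "\<bar>inner h (majorant g)\<bar> \<le> (\<Sum>k. eigval k * line_coupling (eigvec k) h g)"
  unfolding inner_majorant real_norm_def[symmetric]
  using abs_inner_line_proj_le eigval_nonneg summable_eigval_line_coupling[OF assms]
  by (intro norm_suminf_le) (auto simp: abs_mult intro: mult_left_mono)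

lemma trace_norm_majorant_le: "trace_norm J majorant \<le> ereal (4 * suminf eigval)"
proof (rule trace_norm_le)
  fix n g f assume g: "orthonormal_fam J n g" and f: "orthonormal_fam J n f"
  have unit: "norm (g i) \<le> 1" "norm (f i) \<le> 1" "norm (J (f i)) \<le> 1" if "i < n" for i
    using g f that by (auto simp: orthonormal_fam_iff norm_eq_sqrt_inner)
  define H where "H i k = eigval k * line_coupling (eigvec k) (f i) (g i)
    + eigval k * line_coupling (eigvec k) (J (f i)) (g i)" for i k
  have H_summable: "summable (H i)" if "i < n" for i
    unfolding H_def using unit[OF that] by (intro summable_add summable_eigval_line_coupling)
  have "cmod (cinner J (f i) (majorant (g i))) \<le> suminf (H i)" if "i < n" for i
  proof -
    have "cmod (cinner J (f i) (majorant (g i)))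
        \<le> (\<Sum>k. eigval k * line_coupling (eigvec k) (f i) (g i))
          + (\<Sum>k. eigval k * line_coupling (eigvec k) (J (f i)) (g i))"
      using norm_cinner_le[of "f i" "majorant (g i)"] unit[OF that]
        abs_inner_majorant_le[of "f i" "g i"] abs_inner_majorant_le[of "J (f i)" "g i"]
      by linarith
    also have "\<dots> = suminf (H i)"
      unfolding H_def using unit[OF that] by (intro suminf_add summable_eigval_line_coupling)
    finally show ?thesis .
  qed
  then have "(\<Sum>i<n. cmod (cinner J (f i) (majorant (g i)))) \<le> (\<Sum>i<n. suminf (H i))"
    by (intro sum_mono) auto
  also have "\<dots> = (\<Sum>k. \<Sum>i<n. H i k)" using H_summable by (intro suminf_sum[symmetric]) auto
  also have "\<dots> \<le> (\<Sum>k. 4 * eigval k)"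
  proof (rule suminf_le)
    show "(\<Sum>i<n. H i k) \<le> 4 * eigval k" for k
      using mult_left_mono[OF sum_line_coupling_le[OF norm_eigvec_le f g] eigval_nonneg]
      by (simp add: H_def sum_distrib_left distrib_left mult.commute)
    show "summable (\<lambda>k. \<Sum>i<n. H i k)" using H_summable by (intro summable_sum) auto
  qed (rule summable_mult[OF summable_eigval])
  also have "\<dots> = 4 * suminf eigval" by (rule suminf_mult[OF summable_eigval])
  finally show "(\<Sum>i<n. cmod (cinner J (f i) (majorant (g i)))) \<le> 4 * suminf eigval" .
qed

lemma trace_class_majorant: "trace_class J majorant"
  using bounded_linear_majorant majorant_J trace_norm_majorant_le
  by (auto simp: trace_class_def bounded_op_def intro: le_less_trans)

end

context complex_hilbert
begin

lemma exists_positive_trace_class_majorant: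
  assumes "trace_class J A" "selfadjoint_op J A"
  shows "\<exists>P. trace_class J P \<and> selfadjoint_op J P \<and> (\<forall>x. 0 \<le> inner x (P x) \<and> inner x (A x) \<le> inner x (P x))"
proof -
  obtain b where b: "trace_norm J A = ereal b"
    using assms(1) trace_norm_nonneg[of A] by (cases "trace_norm J A") (auto simp: trace_class_def)
  have "(\<Sum>i<n. inner (w i) (A (w i))) \<le> b" if "orthonormal_fam J n w" for n w
  proof -
    have "(\<Sum>i<n. inner (w i) (A (w i))) \<le> (\<Sum>i<n. cmod (cinner J (w i) (A (w i))))"
      by (intro sum_mono) (metis cinner_def complex.sel(1) complex_Re_le_cmod)
    also have "\<dots> \<le> b" using trace_norm_ge[OF that that, of A] b by simp
    finally show ?thesis .
  qed
  then interpret M: trace_bounded_op J A b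
    using assms(2) by unfold_locales
  show ?thesis
    using M.trace_class_majorant M.selfadjoint_majorant M.quadratic_majorant_nonneg M.quadratic_le_majorant
    by blast
qed

lemma finite_family_upper_bound:
  assumes "finite C" "\<And>c. c \<in> C \<Longrightarrow> trace_class J (F c) \<and> selfadjoint_op J (F c)"
  obtains U where "trace_class J U" "selfadjoint_op J U"
    "\<And>c x. c \<in> C \<Longrightarrow> inner x (F c x) \<le> inner x (U x)"
proof -
  have "\<forall>c\<in>C. \<exists>P. trace_class J P \<and> selfadjoint_op J P \<and>
      (\<forall>x. 0 \<le> inner x (P x) \<and> inner x (F c x) \<le> inner x (P x))"
    using assms(2) exists_positive_trace_class_majorant by simp
  from bchoice[OF this] obtain P where P: "\<forall>c\<in>C. trace_class J (P c) \<and> selfadjoint_op J (P c) \<and>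
      (\<forall>x. 0 \<le> inner x (P c x) \<and> inner x (F c x) \<le> inner x (P c x))"
    by blast
  have bound: "inner x (F c x) \<le> inner x (\<Sum>c'\<in>C. P c' x)" if "c \<in> C" for c x
  proof -
    have "inner x (P c x) \<le> (\<Sum>c'\<in>C. inner x (P c' x))"
      by (rule member_le_sum[OF that _ assms(1)]) (use P in simp)
    moreover have "inner x (F c x) \<le> inner x (P c x)" using P that by simp
    ultimately show ?thesis by (simp add: inner_sum_right)
  qed
  have "trace_class J (\<lambda>x. \<Sum>c\<in>C. P c x) \<and> selfadjoint_op J (\<lambda>x. \<Sum>c\<in>C. P c x)"
    using P by (intro trace_class_selfadjoint_op_sum[OF assms(1)]) simp
  then show ?thesis using that[OF _ _ bound] by blast
qed

lemma regular_imp_uniform_bound: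
  fixes T :: "'a::metric_space \<Rightarrow> 'h \<Rightarrow> 'h"
  assumes "compact (UNIV :: 'a set)" "regular J T" "\<And>\<theta>. selfadjoint_op J (T \<theta>)"
  shows "\<exists>\<delta> X. \<delta> > 0 \<and> trace_class J X \<and> selfadjoint_op J X \<and>
    (\<forall>\<theta> \<eta> x. dist \<theta> \<eta> < \<delta> \<longrightarrow> inner x (T \<theta> x) \<le> inner x (T \<eta> x) + inner x (X x))"
proof -
  have "((\<lambda>\<delta>. omega J T UNIV \<delta>) \<longlongrightarrow> 0) (at_right 0)"
    using assms(1,2) by (simp add: regular_def)
  then have "eventually (\<lambda>\<delta>. omega J T UNIV \<delta> < 1) (at_right (0::real))"
    by (rule order_tendstoD(2)) simp
  then have "eventually (\<lambda>\<delta>. 0 < \<delta> \<and> omega J T UNIV \<delta> < 1) (at_right (0::real))"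
    by (rule eventually_conj[OF eventually_at_right_less])
  then have "\<exists>\<delta>. 0 < \<delta> \<and> omega J T UNIV \<delta> < 1"
    by (rule eventually_happens'[rotated]) simp
  then obtain \<delta> :: real where "\<delta> > 0" "omega J T UNIV \<delta> < 1" by blast
  then obtain X where X: "trace_class J X"
    and le_X: "\<forall>(\<theta>, \<eta>) \<in> Kdelta UNIV \<delta>. loewner_le J (- X) (\<lambda>x. T \<theta> x - T \<eta> x) \<and>
        loewner_le J (\<lambda>x. T \<theta> x - T \<eta> x) X"
    unfolding omega_def Inf_less_iff by blast
  have "(undefined, undefined) \<in> Kdelta UNIV \<delta>" using \<open>\<delta> > 0\<close> by (simp add: Kdelta_def)
  then have X_sa: "selfadjoint_op J X" using le_X by (auto simp: loewner_le_def)
  have "inner x (T \<theta> x) \<le> inner x (T \<eta> x) + inner x (X x)" if "dist \<theta> \<eta> < \<delta>" for \<theta> \<eta> x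
  proof -
    have "loewner_le J (\<lambda>x. T \<theta> x - T \<eta> x) X" using le_X that by (auto simp: Kdelta_def)
    then have "inner x (T \<theta> x) - inner x (T \<eta> x) \<le> inner x (X x)"
      using loewner_le_iff[OF selfadjoint_op_diff[OF assms(3) assms(3)] X_sa]
      by (simp add: inner_diff_right)
    then show ?thesis by linarith
  qed
  then show ?thesis using \<open>\<delta> > 0\<close> X X_sa by blast
qed

end

theorem lemma3:
  fixes J :: "'h::{real_inner,complete_space} \<Rightarrow> 'h"
    and T :: "'a::metric_space \<Rightarrow> 'h \<Rightarrow> 'h"
  assumes "complex_structure J"
    and "compact (UNIV :: 'a set)"
    and "\<forall>\<theta>. trace_class J (T \<theta>) \<and> selfadjoint_op J (T \<theta>)"
    and "regular J T"
  shows "\<exists>T\<Theta>. trace_class J T\<Theta> \<and> (\<forall>\<theta>. loewner_le J (T \<theta>) T\<Theta>)"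
proof -
  interpret complex_hilbert J by (rule complex_hilbert.intro) fact
  have T: "\<And>\<theta>. trace_class J (T \<theta>)" "\<And>\<theta>. selfadjoint_op J (T \<theta>)" using assms(3) by simp_all
  obtain \<delta> X where "\<delta> > 0" "trace_class J X" "selfadjoint_op J X"
    and near: "\<forall>\<theta> \<eta> x. dist \<theta> \<eta> < \<delta> \<longrightarrow> inner x (T \<theta> x) \<le> inner x (T \<eta> x) + inner x (X x)"
    using regular_imp_uniform_bound[OF assms(2,4) T(2)] by blast
  have "\<exists>C :: 'a set. finite C \<and> UNIV \<subseteq> (\<Union>c\<in>C. ball c \<delta>)"
    using assms(2) \<open>\<delta> > 0\<close> unfolding compact_eq_totally_bounded by simp
  then obtain C :: "'a set" where C: "finite C" "UNIV \<subseteq> (\<Union>c\<in>C. ball c \<delta>)" by blast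
  obtain U where U: "trace_class J U" "selfadjoint_op J U"
    "\<And>c x. c \<in> C \<Longrightarrow> inner x (T c x) \<le> inner x (U x)"
    using finite_family_upper_bound[OF C(1), of T] T by blast
  have "loewner_le J (T \<theta>) (\<lambda>x. X x + U x)" for \<theta>
  proof -
    obtain c where "c \<in> C" "\<theta> \<in> ball c \<delta>" using C(2) by blast
    then have "inner x (T \<theta> x) \<le> inner x (X x + U x)" for x
      using near[rule_format, of \<theta> c x] U(3)[of c x] by (simp add: inner_add_right dist_commute)
    then show ?thesis
      using loewner_le_iff[OF T(2) selfadjoint_op_add[OF \<open>selfadjoint_op J X\<close> U(2)]] by simp
  qed
  with trace_class_add[OF \<open>trace_class J X\<close> U(1)] show ?thesis by blast
qed

end
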